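(* Let $|p|<1$ and let $a,b,q,r,s,t$ be nonzero complex numbers such that all expressions below are well defined. Then for every integer $n\ge1$, \begin{align*} \sum_{k=0}^n&\frac{\theta\big(a(rst/q)^k,\,br^k/q^k,\,s^{k-n}/q^k,\,as^nt^k/(bq^k);p\big)}{\theta\big(a,\,b,\,s^{-n},\,as^n/b;p\big)}\\ &\times\frac{(a;rst/q^2,p)_k(b;r,p)_k(s^{-n};s,p)_k(as^n/b;t,p)_k}{(q;q,p)_k(ast/(bq);st/q,p)_k(as^nrt/q;rt/q,p)_k(brs^{1-n}/q;rs/q,p)_k}\,q^k=0. \end{align*}
   Context: For $|p|<1$ and $x\neq 0$, $\theta(x;p)=(x;p)_\infty(p/x;p)_\infty$ where $(x;p)_\infty=\prod_{k\ge 0}(1-xp^k)$, and $\theta(x_1,\dots,x_m;p)=\prod_{i=1}^m\theta(x_i;p)$. For $a\ne0$ and integer $k\ge0$, $(a;q,p)_k=\prod_{j=0}^{k-1}\theta(aq^j;p)$ (empty product $=1$). *)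

theory Defs
  imports "HOL-Analysis.Analysis"
begin

definition qpoch_inf :: "complex \<Rightarrow> complex \<Rightarrow> complex" where
  "qpoch_inf x p = (\<Prod>k. (1 - x * p ^ k))"

definition theta :: "complex \<Rightarrow> complex \<Rightarrow> complex" where
  "theta x p = qpoch_inf x p * qpoch_inf (p / x) p"

definition theta_list :: "complex list \<Rightarrow> complex \<Rightarrow> complex" where
  "theta_list xs p = (\<Prod>x\<leftarrow>xs. theta x p)"

definition ell_poch :: "complex \<Rightarrow> complex \<Rightarrow> complex \<Rightarrow> nat \<Rightarrow> complex" where
  "ell_poch a q p k = (\<Prod>j<k. theta (a * q ^ j) p)"

end

theory Submission
  imports Defs "HOL-Complex_Analysis.Complex_Analysis"
begin

(* If a = b c d, the k-th summand of the general sum with parameters a, b, c, d equals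
   N(k)/D(k) - N(k-1)/D(k-1) for explicit products N, D of elliptic shifted factorials, so the
   sum telescopes to N(n)/D(n). The theorem is the case c = s^-n, d = a s^n / b, where N(n)
   contains the factor theta(1;p) = 0.
   The difference identity is a four-term theta relation, a reparametrisation of Weierstrass'
   addition formula. That formula is proved by the classical argument: as a function of x, the
   quotient of its two sides is invariant under x -> p x and x -> 1/x and has no poles, so by
   Liouville's theorem it is constant; non-generic parameters follow by continuity. *)

section \<open>The infinite q-Pochhammer symbol\<close>

lemma abs_convergent_prod_qpoch:
  assumes "norm p < 1"
  shows "abs_convergent_prod (\<lambda>k. 1 - x * p ^ k :: complex)"
  unfolding abs_convergent_prod_conv_summable
  using assms by (auto simp: norm_mult norm_power intro!: summable_mult summable_geometric)

lemma qpoch_inf_has_prod: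
  assumes "norm p < 1"
  shows "(\<lambda>k. 1 - x * p ^ k) has_prod qpoch_inf x p"
  unfolding qpoch_inf_def
  by (intro convergent_prod_has_prod abs_convergent_prod_imp_convergent_prod
      abs_convergent_prod_qpoch assms)

lemma qpoch_inf_eq_0_iff:
  assumes "norm p < 1"
  shows "qpoch_inf x p = 0 \<longleftrightarrow> (\<exists>k. x * p ^ k = 1)"
  using has_prod_eq_0_iff[OF qpoch_inf_has_prod[OF assms, of x]] by (auto simp: eq_commute[of 1])

lemma qpoch_inf_shift:
  assumes "norm p < 1"
  shows "qpoch_inf x p = (1 - x) * qpoch_inf (x * p) p"
proof (cases "x = 1")
  case True
  then show ?thesis
    using qpoch_inf_eq_0_iff[OF assms, of 1] by (auto intro: exI[of _ 0])
next
  case False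
  have "convergent_prod (\<lambda>k. 1 - x * p ^ k)"
    by (intro abs_convergent_prod_imp_convergent_prod abs_convergent_prod_qpoch assms)
  from prodinf_split_head[OF this] False
  have "(\<Prod>k. 1 - x * p ^ Suc k) = qpoch_inf x p / (1 - x)"
    unfolding qpoch_inf_def by simp
  moreover have "(\<Prod>k. 1 - x * p ^ Suc k) = qpoch_inf (x * p) p"
    unfolding qpoch_inf_def by (simp add: mult_ac)
  ultimately show ?thesis
    using False by (simp add: field_simps)
qed

lemma qpoch_inf_nome_nonzero:
  assumes "norm p < 1"
  shows "qpoch_inf p p \<noteq> 0"
proof
  assume "qpoch_inf p p = 0"
  then obtain k where "p ^ Suc k = 1"
    using qpoch_inf_eq_0_iff[OF assms] by auto
  then have "norm p ^ Suc k = 1"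
    by (metis norm_one norm_power)
  moreover have "norm p ^ Suc k < 1"
    using assms by (subst power_less_one_iff) auto
  ultimately show False
    by simp
qed

lemma uniform_limit_qpoch_inf:
  assumes "norm p < 1"
  shows "uniform_limit (cball 0 R) (\<lambda>N x. \<Prod>k<N. 1 - x * p ^ k) (\<lambda>x. qpoch_inf x p) sequentially"
proof -
  have "uniformly_convergent_on (cball 0 R) (\<lambda>N x. \<Prod>k<N. 1 - x * p ^ k)"
  proof (rule uniformly_convergent_on_prod')
    show "uniformly_convergent_on (cball 0 R) (\<lambda>N x. \<Sum>k<N. norm (1 - x * p ^ k - 1))"
    proof (rule Weierstrass_m_test')
      fix k and x :: complex
      assume "x \<in> cball 0 R"
      then show "norm (norm (1 - x * p ^ k - 1)) \<le> R * norm p ^ k"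
        by (simp add: norm_mult norm_power mult_right_mono)
    next
      show "summable (\<lambda>k. R * norm p ^ k)"
        using assms by (intro summable_mult summable_geometric) auto
    qed
  qed (simp_all add: continuous_intros)
  then obtain g where g: "uniform_limit (cball 0 R) (\<lambda>N x. \<Prod>k<N. 1 - x * p ^ k) g sequentially"
    by (auto simp: uniformly_convergent_on_def)
  have limit_eq: "g x = qpoch_inf x p" if "x \<in> cball 0 R" for x
    using tendsto_uniform_limitI[OF g that] has_prod_imp_tendsto'[OF qpoch_inf_has_prod[OF assms]]
    by (rule LIMSEQ_unique)
  show ?thesis
    by (rule uniform_limit_cong'[THEN iffD1, OF _ _ g]) (simp_all add: limit_eq)
qed

lemma holomorphic_qpoch_inf:
  assumes "norm p < 1"
  shows "(\<lambda>x. qpoch_inf x p) holomorphic_on A"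
proof (rule holomorphic_on_subset)
  show "(\<lambda>x. qpoch_inf x p) holomorphic_on UNIV"
  proof (rule holomorphic_uniform_sequence)
    fix z :: complex
    have "uniform_limit (cball z 1) (\<lambda>N x. \<Prod>k<N. 1 - x * p ^ k) (\<lambda>x. qpoch_inf x p) sequentially"
      by (rule uniform_limit_on_subset[OF uniform_limit_qpoch_inf[OF assms, of "norm z + 1"]])
        (simp add: cball_subset_cball_iff)
    then show "\<exists>d>0. cball z d \<subseteq> UNIV \<and>
        uniform_limit (cball z d) (\<lambda>N x. \<Prod>k<N. 1 - x * p ^ k) (\<lambda>x. qpoch_inf x p) sequentially"
      by (intro exI[of _ 1]) auto
  next
    show "\<And>N. (\<lambda>x. \<Prod>k<N. 1 - x * p ^ k) holomorphic_on UNIV"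
      by (intro holomorphic_intros)
  qed simp
qed simp

lemma holomorphic_on_qpoch_inf:
  assumes "norm p < 1" "f holomorphic_on A"
  shows "(\<lambda>x. qpoch_inf (f x) p) holomorphic_on A"
  using holomorphic_on_compose[OF assms(2) holomorphic_qpoch_inf[OF assms(1)]]
  by (simp add: o_def)

section \<open>The theta function\<close>

lemma theta_eq_factor:
  assumes "norm p < 1"
  shows "theta x p = (1 - x) * (qpoch_inf (x * p) p * qpoch_inf (p / x) p)"
  unfolding theta_def by (subst qpoch_inf_shift[OF assms]) simp

lemma theta_one:
  assumes "norm p < 1"
  shows "theta 1 p = 0"
  using theta_eq_factor[OF assms, of 1] by simp

lemma theta_nome_0: "theta x 0 = 1 - x"
proof -
  have "qpoch_inf 0 0 = 1"
    unfolding qpoch_inf_def by simp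
  then show ?thesis
    unfolding theta_def using qpoch_inf_shift[of 0 x] by simp
qed

lemma theta_inverse:
  assumes "norm p < 1" "x \<noteq> 0"
  shows "theta (1 / x) p = - theta x p / x"
proof -
  have "theta (1 / x) p = (1 - 1 / x) * (qpoch_inf (x * p) p * qpoch_inf (p / x) p)"
    unfolding theta_def by (subst qpoch_inf_shift[OF assms(1)]) (simp add: mult_ac)
  also have "\<dots> = - theta x p / x"
    using assms(2) by (simp add: theta_eq_factor[OF assms(1)] field_simps)
  finally show ?thesis .
qed

lemma theta_mult_nome:
  assumes "norm p < 1" "x \<noteq> 0" "p \<noteq> 0"
  shows "theta (p * x) p = - theta x p / x"
proof -
  have "theta (p * x) p = theta (1 / x) p"
    unfolding theta_def using assms(3) by (simp add: mult.commute)
  then show ?thesis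
    using theta_inverse[OF assms(1,2)] by simp
qed

lemma theta_eq_0_imp_power_int:
  assumes "norm p < 1" "x \<noteq> 0" "theta x p = 0"
  shows "\<exists>k::int. x = p powi k"
proof -
  have "qpoch_inf x p = 0 \<or> qpoch_inf (p / x) p = 0"
    using assms(3) unfolding theta_def by simp
  then show ?thesis
  proof
    assume "qpoch_inf x p = 0"
    then obtain k where k: "x * p ^ k = 1"
      using qpoch_inf_eq_0_iff[OF assms(1)] by auto
    then have "p ^ k \<noteq> 0"
      by (metis mult_zero_right zero_neq_one)
    with k have "x = p powi (- int k)"
      by (simp add: power_int_minus field_simps)
    then show ?thesis ..
  next
    assume "qpoch_inf (p / x) p = 0"
    then obtain k where "p / x * p ^ k = 1"
      using qpoch_inf_eq_0_iff[OF assms(1)] by auto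
    then have "x = p ^ Suc k"
      using assms(2) by (simp add: field_simps)
    then have "x = p powi int (Suc k)"
      by (simp only: power_int_of_nat)
    then show ?thesis ..
  qed
qed

lemma holomorphic_on_theta:
  assumes "norm p < 1" "f holomorphic_on A" "\<And>x. x \<in> A \<Longrightarrow> f x \<noteq> 0"
  shows "(\<lambda>x. theta (f x) p) holomorphic_on A"
  unfolding theta_def using assms
  by (intro holomorphic_on_mult holomorphic_on_qpoch_inf holomorphic_intros) auto

definition theta_pm :: "complex \<Rightarrow> complex \<Rightarrow> complex \<Rightarrow> complex" where
  "theta_pm p c x = theta (x * c) p * theta (x / c) p"

lemma theta_pm_mult_nome:
  assumes "norm p < 1" "p \<noteq> 0" "c \<noteq> 0" "x \<noteq> 0"
  shows "theta_pm p c (p * x) = theta_pm p c x / x ^ 2"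
proof -
  have times: "theta (p * x * c) p = - theta (x * c) p / (x * c)"
    using theta_mult_nome[OF assms(1) _ assms(2), of "x * c"] assms by (simp add: mult.assoc)
  have divide: "theta (p * x / c) p = - theta (x / c) p / (x / c)"
    using theta_mult_nome[OF assms(1) _ assms(2), of "x / c"] assms by simp
  show ?thesis
    unfolding theta_pm_def times divide using assms by (simp add: field_simps power2_eq_square)
qed

lemma theta_pm_inverse:
  assumes "norm p < 1" "c \<noteq> 0" "x \<noteq> 0"
  shows "theta_pm p c (1 / x) = theta_pm p c x / x ^ 2"
proof -
  have times: "theta (1 / x * c) p = - theta (x / c) p / (x / c)"
    using theta_inverse[OF assms(1), of "x / c"] assms by simp
  have divide: "theta (1 / x / c) p = - theta (x * c) p / (x * c)"
    using theta_inverse[OF assms(1), of "x * c"] assms by simp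
  show ?thesis
    unfolding theta_pm_def times divide using assms by (simp add: field_simps power2_eq_square)
qed

lemma theta_pm_self:
  assumes "norm p < 1" "c \<noteq> 0"
  shows "theta_pm p c c = 0"
  unfolding theta_pm_def using assms theta_one by simp

lemma theta_pm_swap:
  assumes "norm p < 1" "c \<noteq> 0" "x \<noteq> 0"
  shows "theta_pm p x c = - (c / x) * theta_pm p c x"
  using assms theta_inverse[OF assms(1), of "x / c"]
  unfolding theta_pm_def by (simp add: mult.commute)

lemma holomorphic_theta_pm:
  assumes "norm p < 1" "c \<noteq> 0"
  shows "theta_pm p c holomorphic_on -{0}"
  unfolding theta_pm_def[abs_def] using assms
  by (intro holomorphic_on_mult holomorphic_on_theta holomorphic_intros) auto

section \<open>Multiplicatively periodic holomorphic functions\<close>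

lemma power_int_scale_into_annulus:
  fixes a r :: real
  assumes "0 < a" "a < 1" "0 < r"
  obtains k :: int where "a \<le> a powi k * r" "a powi k * r \<le> 1"
proof
  define l where "l = log a r"
  have "a powi (- \<lfloor>l\<rfloor>) * r = a powr (- \<lfloor>l\<rfloor>) * a powr l"
    using assms powr_real_of_int'[of a "- \<lfloor>l\<rfloor>"] by (simp add: l_def)
  also have "\<dots> = a powr frac l"
    by (simp add: frac_def powr_add[symmetric])
  finally have scaled: "a powi (- \<lfloor>l\<rfloor>) * r = a powr frac l" .
  have "a = a powr 1"
    using assms by simp
  also have "\<dots> \<le> a powr frac l"
    using assms by (intro powr_mono') (auto intro: less_imp_le frac_lt_1)
  finally show "a \<le> a powi (- \<lfloor>l\<rfloor>) * r"
    unfolding scaled .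
  show "a powi (- \<lfloor>l\<rfloor>) * r \<le> 1"
    unfolding scaled using assms by (intro powr_le1) auto
qed

lemma invariant_under_power_int:
  fixes p :: "'a :: field"
  assumes "p \<noteq> 0" "\<And>x. x \<noteq> 0 \<Longrightarrow> H (p * x) = H x" "x \<noteq> 0"
  shows "H (p powi k * x) = H x"
proof (induction k rule: int_induct[where k = 0])
  case base
  show ?case by simp
next
  case (step1 i)
  have "p powi (i + 1) * x = p * (p powi i * x)"
    using assms(1) by (simp add: power_int_add mult_ac)
  also have "H \<dots> = H (p powi i * x)"
    using assms by (intro assms(2)) simp
  finally show ?case
    using step1 by simp
next
  case (step2 i)
  have "p powi i * x = p * (p powi (i - 1) * x)"
    using assms(1) by (simp add: power_int_diff field_simps)
  then show ?case
    using assms step2 by (metis mult_eq_0_iff power_int_eq_0_iff)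
qed

text \<open>\<open>H\<close> takes all its values on the compact annulus \<open>|p| \<le> |x| \<le> 1\<close>, so \<open>H \<circ> exp\<close> is a
  bounded entire function.\<close>

lemma multiplicatively_periodic_imp_constant:
  assumes "norm p < 1" "p \<noteq> 0" "H holomorphic_on -{0}"
    and periodic: "\<And>x. x \<noteq> 0 \<Longrightarrow> H (p * x) = H x"
  obtains C where "\<And>x. x \<noteq> 0 \<Longrightarrow> H x = C"
proof -
  define K where "K = cball 0 1 \<inter> {x :: complex. norm p \<le> norm x}"
  have "closed {x :: complex. norm p \<le> norm x}"
    by (intro closed_Collect_le continuous_intros)
  then have "compact K"
    unfolding K_def by (intro compact_Int_closed) auto
  moreover have "K \<subseteq> -{0}"
    unfolding K_def using assms(2) by auto
  ultimately have "compact (H ` K)"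
    using assms(3) by (meson compact_continuous_image continuous_on_subset
        holomorphic_on_imp_continuous_on)
  then obtain B where B: "\<And>x. x \<in> K \<Longrightarrow> norm (H x) \<le> B"
    by (meson bounded_iff compact_imp_bounded imageI)
  have "norm (H x) \<le> B" if x: "x \<noteq> 0" for x
  proof -
    obtain k :: int where "norm p \<le> norm p powi k * norm x" "norm p powi k * norm x \<le> 1"
      by (rule power_int_scale_into_annulus[of "norm p" "norm x"]) (use assms(1,2) x in auto)
    then have "p powi k * x \<in> K"
      unfolding K_def by (simp add: norm_mult norm_power_int)
    then show ?thesis
      using B invariant_under_power_int[where H = H, OF assms(2) periodic x] by metis
  qed
  then have "bounded (range (H \<circ> exp))"
    unfolding bounded_iff by (metis comp_apply exp_not_eq_zero rangeE)
  moreover have "(H \<circ> exp) holomorphic_on UNIV"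
    by (rule holomorphic_on_compose_gen[OF _ assms(3)]) (auto intro: holomorphic_intros)
  ultimately have "(H \<circ> exp) constant_on UNIV"
    using Liouville_theorem by blast
  then obtain C where "\<And>z. H (exp z) = C"
    unfolding constant_on_def by auto
  then show ?thesis
    using that by (metis exp_Ln)
qed

lemma tendsto_at_via_invariance:
  assumes "f \<midarrow>b\<rightarrow> c" "isCont g a" "g a = b"
    and "\<forall>\<^sub>F x in at a. g x \<noteq> b" "\<forall>\<^sub>F x in at a. f (g x) = f x"
  shows "f \<midarrow>a\<rightarrow> c"
proof -
  have "g \<midarrow>a\<rightarrow> b"
    using assms(2,3) isContD by fastforce
  with assms(1) have "(\<lambda>x. f (g x)) \<midarrow>a\<rightarrow> c"
    by (rule tendsto_compose_eventually) (rule assms(4))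
  then show ?thesis
    by (rule Lim_transform_eventually[OF _ assms(5)])
qed

section \<open>Weierstrass' addition formula\<close>

text \<open>Both \<open>numer\<close> and \<open>denom\<close> pick up the factor \<open>1/x^2\<close> under \<open>x \<mapsto> p x\<close> and under
  \<open>x \<mapsto> 1/x\<close>. The zero of \<open>denom\<close> at \<open>u\<close> is simple (this needs \<open>theta (u * u) p \<noteq> 0\<close>) and
  cancels against \<open>numer u = 0\<close>; the two symmetries carry the cancellation to the other zeros
  \<open>p^k u\<close> and \<open>p^k / u\<close>.\<close>

locale theta_addition_generic =
  fixes p y u v :: complex
  assumes nome: "norm p < 1" "p \<noteq> 0"
    and nonzero: "y \<noteq> 0" "u \<noteq> 0" "v \<noteq> 0"
    and generic: "theta (u * u) p \<noteq> 0" "theta (u * y) p \<noteq> 0" "theta (u / y) p \<noteq> 0"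
begin

definition numer :: "complex \<Rightarrow> complex" where
  "numer x = theta_pm p y x * theta_pm p v u - theta_pm p v x * theta_pm p y u"

definition denom :: "complex \<Rightarrow> complex" where
  "denom = theta_pm p u"

definition ratio :: "complex \<Rightarrow> complex" where
  "ratio x = numer x / denom x"

lemma holomorphic_numer: "numer holomorphic_on -{0}"
  unfolding numer_def[abs_def]
  using holomorphic_theta_pm[OF nome(1)] nonzero by (intro holomorphic_intros) auto

lemma holomorphic_denom: "denom holomorphic_on -{0}"
  unfolding denom_def using holomorphic_theta_pm[OF nome(1) nonzero(2)] .

lemma analytic_numer: "x \<noteq> 0 \<Longrightarrow> numer analytic_on {x}"
  by (rule holomorphic_on_imp_analytic_at[OF holomorphic_numer]) auto

lemma analytic_denom: "x \<noteq> 0 \<Longrightarrow> denom analytic_on {x}"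
  by (rule holomorphic_on_imp_analytic_at[OF holomorphic_denom]) auto

lemma denom_y_nonzero: "denom y \<noteq> 0"
proof -
  have "theta_pm p y u \<noteq> 0"
    unfolding theta_pm_def using generic(2,3) by (simp add: mult.commute)
  then show ?thesis
    unfolding denom_def using theta_pm_swap[OF nome(1) nonzero(1,2)] nonzero by simp
qed

lemma eventually_denom_nonzero: "x \<noteq> 0 \<Longrightarrow> \<forall>\<^sub>F w in at x. denom w \<noteq> 0"
  by (rule eventually_mono[OF non_zero_neighbour_alt[OF holomorphic_denom _ _ _ _ denom_y_nonzero]])
    (auto simp: connected_punctured_universe nonzero)

lemma ratio_mult_nome:
  assumes "x \<noteq> 0"
  shows "ratio (p * x) = ratio x"
proof -
  have "numer (p * x) = numer x / x ^ 2" "denom (p * x) = denom x / x ^ 2"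
    unfolding numer_def denom_def using theta_pm_mult_nome[OF nome _ assms] nonzero assms
    by (simp_all add: field_simps)
  then show ?thesis
    unfolding ratio_def using assms by simp
qed

lemma ratio_inverse:
  assumes "x \<noteq> 0"
  shows "ratio (1 / x) = ratio x"
proof -
  have "numer (1 / x) = numer x / x ^ 2" "denom (1 / x) = denom x / x ^ 2"
    unfolding numer_def denom_def using theta_pm_inverse[OF nome(1) _ assms] nonzero assms
    by (simp_all add: field_simps)
  then show ?thesis
    unfolding ratio_def using assms by simp
qed

lemma ratio_power_int: "x \<noteq> 0 \<Longrightarrow> ratio (p powi k * x) = ratio x"
  using invariant_under_power_int[where H = ratio, OF nome(2) ratio_mult_nome] .

lemma ratio_tendsto_power_int:
  assumes "w \<noteq> 0" "ratio \<midarrow>w\<rightarrow> c"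
  shows "ratio \<midarrow>(p powi k * w)\<rightarrow> c"
proof (rule tendsto_at_via_invariance[OF assms(2), where g = "\<lambda>x. p powi (- k) * x"])
  show "isCont (\<lambda>x. p powi (- k) * x) (p powi k * w)"
    by (intro continuous_intros)
  show "p powi (- k) * (p powi k * w) = w"
    using nome(2) by (simp add: power_int_minus field_simps)
  show "\<forall>\<^sub>F x in at (p powi k * w). p powi (- k) * x \<noteq> w"
    using eventually_neq_at_within[of "p powi k * w"]
    by eventually_elim (use nome(2) in \<open>auto simp: power_int_minus field_simps\<close>)
  show "\<forall>\<^sub>F x in at (p powi k * w). ratio (p powi (- k) * x) = ratio x"
    using eventually_neq_at_within[of 0] by eventually_elim (simp add: ratio_power_int)
qed

lemma ratio_tendsto_inverse:
  assumes "w \<noteq> 0" "ratio \<midarrow>w\<rightarrow> c"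
  shows "ratio \<midarrow>(1 / w)\<rightarrow> c"
proof (rule tendsto_at_via_invariance[OF assms(2), where g = "\<lambda>x. 1 / x"])
  show "isCont (\<lambda>x. 1 / x) (1 / w)"
    using assms(1) by (intro continuous_intros) auto
  show "1 / (1 / w) = w"
    by simp
  show "\<forall>\<^sub>F x in at (1 / w). 1 / x \<noteq> w"
    using eventually_neq_at_within[of "1 / w"]
    by eventually_elim (use assms(1) in \<open>auto simp: field_simps\<close>)
  show "\<forall>\<^sub>F x in at (1 / w). ratio (1 / x) = ratio x"
    using eventually_neq_at_within[of 0] by eventually_elim (simp add: ratio_inverse)
qed

lemma ratio_has_limit_at_u: "\<exists>c. ratio \<midarrow>u\<rightarrow> c"
proof -
  define E where "E w = - theta (w * u) p * qpoch_inf (w / u * p) p * qpoch_inf (p / (w / u)) p / u"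
    for w
  have denom_eq: "denom w = (w - u) * E w" for w
    unfolding denom_def theta_pm_def E_def theta_eq_factor[OF nome(1), of "w / u"]
    using nonzero(2) by (simp add: field_simps)
  have "numer field_differentiable at u"
    using analytic_numer[OF nonzero(2)] analytic_on_imp_differentiable_at by blast
  then have quotient: "((\<lambda>w. (numer w - numer u) / (w - u)) \<longlongrightarrow> deriv numer u) (at u)"
    by (simp flip: DERIV_deriv_iff_field_differentiable add: has_field_derivative_iff)
  have "E holomorphic_on -{0}"
    unfolding E_def[abs_def] using nome(1) nonzero(2)
    by (intro holomorphic_intros holomorphic_on_theta holomorphic_on_qpoch_inf) auto
  then have "isCont E u"
    using nonzero(2) by (intro analytic_at_imp_isCont holomorphic_on_imp_analytic_at) auto
  moreover have "E u \<noteq> 0"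
    unfolding E_def using nonzero(2) generic(1) qpoch_inf_nome_nonzero[OF nome(1)] by simp
  ultimately have "((\<lambda>w. (numer w - numer u) / (w - u) / E w) \<longlongrightarrow> deriv numer u / E u) (at u)"
    using quotient by (intro tendsto_divide) (auto simp: isContD)
  moreover have "numer u = 0"
    unfolding numer_def by simp
  then have "\<forall>\<^sub>F w in at u. (numer w - numer u) / (w - u) / E w = ratio w"
    by (auto simp: eventually_at_filter ratio_def denom_eq)
  ultimately show ?thesis
    using Lim_transform_eventually by blast
qed

lemma ratio_has_limit:
  assumes "z \<noteq> 0"
  shows "\<exists>c. ratio \<midarrow>z\<rightarrow> c"
proof (cases "denom z = 0")
  case False
  then have "isCont ratio z"
    unfolding ratio_def[abs_def] using analytic_numer[OF assms] analytic_denom[OF assms]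
    by (intro continuous_intros) (auto simp: analytic_at_imp_isCont)
  then show ?thesis
    using isContD by blast
next
  case True
  obtain c where c: "ratio \<midarrow>u\<rightarrow> c"
    using ratio_has_limit_at_u by blast
  have "theta (z * u) p = 0 \<or> theta (z / u) p = 0"
    using True unfolding denom_def theta_pm_def by simp
  then obtain k :: int where "z * u = p powi k \<or> z / u = p powi k"
    using theta_eq_0_imp_power_int[OF nome(1)] assms nonzero(2) by (metis divide_eq_0_iff mult_eq_0_iff)
  then have "z = p powi k * (1 / u) \<or> z = p powi k * u"
    using nonzero(2) by (auto simp: field_simps)
  then show ?thesis
    using ratio_tendsto_power_int ratio_tendsto_inverse[OF nonzero(2) c] c nonzero(2)
    by (metis divide_eq_0_iff zero_neq_one)
qed

lemma analytic_remove_sings_ratio: "remove_sings ratio analytic_on -{0}"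
proof (rule analytic_on_analytic_at[THEN iffD2, OF ballI])
  fix z :: complex
  assume "z \<in> -{0}"
  then have "z \<noteq> 0"
    by simp
  then have "isolated_singularity_at ratio z"
    unfolding ratio_def[abs_def]
    by (intro isolated_singularity_at_divide isolated_singularity_at_analytic
        not_essential_analytic analytic_numer analytic_denom)
  moreover obtain c where "ratio \<midarrow>z\<rightarrow> c"
    using ratio_has_limit[OF \<open>z \<noteq> 0\<close>] by blast
  ultimately show "remove_sings ratio analytic_on {z}"
    by (rule remove_sings_analytic_at)
qed

lemma remove_sings_ratio_mult_nome:
  assumes "z \<noteq> 0"
  shows "remove_sings ratio (p * z) = remove_sings ratio z"
proof -
  obtain c where c: "ratio \<midarrow>z\<rightarrow> c"
    using ratio_has_limit[OF assms] by blast
  moreover have "ratio \<midarrow>(p * z)\<rightarrow> c"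
    using ratio_tendsto_power_int[OF assms c, of 1] by simp
  ultimately show ?thesis
    using remove_sings_eqI by metis
qed

lemma numer_eq_const_mult_denom:
  obtains C where "\<And>x. x \<noteq> 0 \<Longrightarrow> numer x = C * denom x"
proof -
  obtain C where C: "\<And>x. x \<noteq> 0 \<Longrightarrow> remove_sings ratio x = C"
    using multiplicatively_periodic_imp_constant[OF nome
        analytic_imp_holomorphic[OF analytic_remove_sings_ratio] remove_sings_ratio_mult_nome]
    by blast
  have "numer x = C * denom x" if x: "x \<noteq> 0" for x
  proof -
    obtain c where "ratio \<midarrow>x\<rightarrow> c"
      using ratio_has_limit[OF x] by blast
    with C[OF x] have "ratio \<midarrow>x\<rightarrow> C"
      using remove_sings_eqI by metis
    then have "(\<lambda>w. ratio w * denom w) \<midarrow>x\<rightarrow> C * denom x"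
      using analytic_denom[OF x] by (intro tendsto_mult) (auto simp: analytic_at_imp_isCont isContD)
    moreover have "\<forall>\<^sub>F w in at x. ratio w * denom w = numer w"
      using eventually_denom_nonzero[OF x] by eventually_elim (simp add: ratio_def)
    ultimately have "numer \<midarrow>x\<rightarrow> C * denom x"
      by (rule Lim_transform_eventually)
    moreover have "numer \<midarrow>x\<rightarrow> numer x"
      using analytic_numer[OF x] by (simp add: analytic_at_imp_isCont isContD)
    ultimately show ?thesis
      using tendsto_unique[OF at_neq_bot] by metis
  qed
  then show ?thesis
    using that by blast
qed

lemma addition_formula:
  assumes "x \<noteq> 0"
  shows "numer x = (u / y) * theta_pm p v y * denom x"
proof -
  obtain C where C: "\<And>x. x \<noteq> 0 \<Longrightarrow> numer x = C * denom x"
    using numer_eq_const_mult_denom by blast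
  have denom_y: "denom y = - (y / u) * theta_pm p y u"
    unfolding denom_def using theta_pm_swap[OF nome(1) nonzero(1,2)] .
  have "numer y = - theta_pm p v y * theta_pm p y u"
    unfolding numer_def theta_pm_self[OF nome(1) nonzero(1)] by simp
  with C[OF nonzero(1)] denom_y denom_y_nonzero have "C = (u / y) * theta_pm p v y"
    using nonzero by (auto simp: field_simps)
  with C[OF assms] show ?thesis
    by simp
qed

end

lemma countable_nonzero_theta_zeros:
  assumes "norm p < 1"
  shows "countable {x. x \<noteq> 0 \<and> theta x p = 0}"
proof (rule countable_subset)
  show "{x. x \<noteq> 0 \<and> theta x p = 0} \<subseteq> range (\<lambda>k::int. p powi k)"
    using theta_eq_0_imp_power_int[OF assms] by blast
qed simp

lemma countable_square_preimage:
  assumes "countable P"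
  shows "countable {u :: complex. u * u \<in> P}"
proof (rule countable_subset)
  show "{u. u * u \<in> P} \<subseteq> (\<Union>w\<in>P. {csqrt w, - csqrt w})"
  proof
    fix u
    assume "u \<in> {u. u * u \<in> P}"
    moreover have "u ^ 2 = (csqrt (u * u)) ^ 2"
      by (metis power2_csqrt power2_eq_square)
    ultimately show "u \<in> (\<Union>w\<in>P. {csqrt w, - csqrt w})"
      unfolding power2_eq_iff by auto
  qed
  show "countable (\<Union>w\<in>P. {csqrt w, - csqrt w})"
    by (rule countable_UN[OF assms], rule countable_finite) simp
qed

lemma continuous_on_vanishing_off_countable:
  fixes F :: "'a::euclidean_space \<Rightarrow> 'b::real_normed_vector"
  assumes "open S" "continuous_on S F" "countable Z"
    and "\<And>x. x \<in> S \<Longrightarrow> x \<notin> Z \<Longrightarrow> F x = 0" "x \<in> S"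
  shows "F x = 0"
proof (rule ccontr)
  assume "F x \<noteq> 0"
  moreover have "open (S \<inter> F -` (-{0}))"
    using assms(1,2) by (intro continuous_open_preimage) auto
  ultimately obtain e where "e > 0" "ball x e \<subseteq> S \<inter> F -` (-{0})"
    using assms(5) by (metis Compl_iff IntI openE singletonD vimageI)
  moreover have "\<not> ball x e \<subseteq> Z"
    using uncountable_ball[OF \<open>e > 0\<close>] assms(3) countable_subset by blast
  ultimately show False
    using assms(4) by blast
qed

text \<open>The genericity
  assumptions of the locale exclude only countably many \<open>u\<close>, and both sides are continuous
  in \<open>u\<close>.\<close>

theorem theta_addition_formula:
  assumes "norm p < 1" "x \<noteq> 0" "y \<noteq> 0" "u \<noteq> 0" "v \<noteq> 0"
  shows "theta_pm p y x * theta_pm p v u - theta_pm p v x * theta_pm p y u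
       = (u / y) * theta_pm p v y * theta_pm p u x"
proof (cases "p = 0")
  case True
  show ?thesis
    unfolding True theta_pm_def theta_nome_0 using assms(2-5) by (simp add: field_simps)
next
  case False
  define F where "F w = theta_pm p y x * theta_pm p v w - theta_pm p v x * theta_pm p y w
    - (w / y) * theta_pm p v y * theta_pm p w x" for w
  define T where "T = {x. x \<noteq> 0 \<and> theta x p = 0}"
  define Z where "Z = {w. w * w \<in> T} \<union> (\<lambda>w. w / y) ` T \<union> (\<lambda>w. w * y) ` T"
  have "(\<lambda>w. theta_pm p w x) holomorphic_on -{0}"
    unfolding theta_pm_def using assms(1,2)
    by (intro holomorphic_on_mult holomorphic_on_theta holomorphic_intros) auto
  then have "continuous_on (-{0}) F"
    unfolding F_def[abs_def] using assms(1,3,5)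
    by (intro holomorphic_on_imp_continuous_on holomorphic_intros holomorphic_theta_pm) auto
  moreover have "countable Z"
    unfolding Z_def T_def using countable_nonzero_theta_zeros[OF assms(1)]
    by (intro countable_Un countable_image countable_square_preimage)
  moreover have "F w = 0" if "w \<in> -{0}" "w \<notin> Z" for w
  proof -
    have "theta (w * w) p \<noteq> 0" "theta (w * y) p \<noteq> 0" "theta (w / y) p \<noteq> 0"
      using that assms(3) unfolding Z_def T_def by (auto simp: image_iff)
    then interpret theta_addition_generic p y w v
      using False assms that by unfold_locales auto
    show ?thesis
      unfolding F_def using addition_formula[OF assms(2)] unfolding numer_def denom_def by simp
  qed
  ultimately have "F u = 0"
    using continuous_on_vanishing_off_countable[OF open_Compl[OF closed_singleton]] assms(4)
    by blast
  then show ?thesis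
    unfolding F_def by simp
qed

text \<open>The substitution \<open>x = sqrt(b c)\<close>, \<open>y = b / x\<close>, \<open>u = d x / q\<close>, \<open>v = q / x\<close> in the addition
  formula.\<close>

lemma theta_four_term_identity:
  assumes "norm p < 1" "b \<noteq> 0" "c \<noteq> 0" "d \<noteq> 0" "q \<noteq> 0"
  shows "theta (b * c * d / q ^ 2) p * theta b p * theta c p * theta d p
       - theta q p * theta (c * d / q) p * theta (b * d / q) p * theta (b * c / q) p
       = q * theta (b * c * d / q) p * theta (b / q) p * theta (c / q) p * theta (d / q) p"
proof -
  define x where "x = csqrt (b * c)"
  have xx: "x * x = b * c"
    unfolding x_def by (metis power2_csqrt power2_eq_square)
  have "x \<noteq> 0"
    using xx assms(2,3) by auto
  define y u v where "y = b / x" and "u = d * x / q" and "v = q / x"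
  have "y \<noteq> 0" "u \<noteq> 0" "v \<noteq> 0"
    unfolding y_def u_def v_def using assms \<open>x \<noteq> 0\<close> by auto
  from theta_addition_formula[OF assms(1) \<open>x \<noteq> 0\<close> this]
  have addition: "theta (x * y) p * theta (x / y) p * (theta (u * v) p * theta (u / v) p)
      - theta (x * v) p * theta (x / v) p * (theta (u * y) p * theta (u / y) p)
      = (u / y) * (theta (y * v) p * theta (y / v) p) * (theta (x * u) p * theta (x / u) p)"
    unfolding theta_pm_def .
  have arguments: "x * y = b" "x / y = c" "u * v = d" "u / v = b * c * d / q ^ 2" "x * v = q"
    "x / v = b * c / q" "u * y = b * d / q" "u / y = c * d / q" "y * v = 1 / (c / q)"
    "y / v = b / q" "x * u = b * c * d / q" "x / u = 1 / (d / q)"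
    unfolding y_def u_def v_def using assms \<open>x \<noteq> 0\<close> xx
    by (simp_all add: field_simps power2_eq_square)
  have inverses: "theta (1 / (c / q)) p = - theta (c / q) p / (c / q)"
    "theta (1 / (d / q)) p = - theta (d / q) p / (d / q)"
    using theta_inverse[OF assms(1), of "c / q"] theta_inverse[OF assms(1), of "d / q"] assms
    by simp_all
  show ?thesis
    using addition unfolding arguments inverses using assms by (simp add: field_simps)
qed

lemma ell_poch_0 [simp]: "ell_poch a q p 0 = 1"
  unfolding ell_poch_def by simp

lemma ell_poch_Suc: "ell_poch a q p (Suc k) = ell_poch a q p k * theta (a * q ^ k) p"
  unfolding ell_poch_def by simp

lemma ell_poch_Suc_shift: "ell_poch a q p (Suc k) = theta a p * ell_poch (a * q) q p k"
  unfolding ell_poch_def prod.lessThan_Suc_shift by (simp add: mult.assoc)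

lemma ell_poch_eq_0:
  assumes "norm p < 1" "j < k" "a * q ^ j = 1"
  shows "ell_poch a q p k = 0"
  unfolding ell_poch_def using assms theta_one by (intro prod_zero bexI[of _ j]) auto

lemma theta_list_4: "theta_list [x1, x2, x3, x4] p = theta x1 p * theta x2 p * theta x3 p * theta x4 p"
  unfolding theta_list_def by (simp add: mult.assoc)

section \<open>An elliptic indefinite summation\<close>

locale elliptic_telescoping =
  fixes p a b c d q r s t :: complex
  assumes nome: "norm p < 1"
    and nonzero: "b \<noteq> 0" "c \<noteq> 0" "d \<noteq> 0" "q \<noteq> 0" "r \<noteq> 0" "s \<noteq> 0" "t \<noteq> 0"
    and balanced: "a = b * c * d"
begin

definition denominator :: "nat \<Rightarrow> complex" where
  "denominator k = ell_poch q q p k * ell_poch (a * s * t / (b * q)) (s * t / q) p k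
     * ell_poch (a * r * t / (c * q)) (r * t / q) p k * ell_poch (a * r * s / (d * q)) (r * s / q) p k"

definition summand :: "nat \<Rightarrow> complex" where
  "summand k = theta_list [a * (r * s * t / q) ^ k, b * r ^ k / q ^ k, c * s ^ k / q ^ k,
       d * t ^ k / q ^ k] p / theta_list [a, b, c, d] p
     * (ell_poch a (r * s * t / q ^ 2) p k * ell_poch b r p k * ell_poch c s p k * ell_poch d t p k)
     / denominator k * q ^ k"

definition closed_numer :: "nat \<Rightarrow> complex" where
  "closed_numer k = ell_poch (a * (r * s * t / q ^ 2)) (r * s * t / q ^ 2) p k
     * ell_poch (b * r) r p k * ell_poch (c * s) s p k * ell_poch (d * t) t p k"

lemma theta_telescoping_step:
  "theta (a * (r * s * t / q ^ 2) * (r * s * t / q ^ 2) ^ m) p * theta (b * r * r ^ m) p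
     * theta (c * s * s ^ m) p * theta (d * t * t ^ m) p
   - theta (q * q ^ m) p * theta (a * s * t / (b * q) * (s * t / q) ^ m) p
     * theta (a * r * t / (c * q) * (r * t / q) ^ m) p * theta (a * r * s / (d * q) * (r * s / q) ^ m) p
   = q ^ Suc m * theta_list [a * (r * s * t / q) ^ Suc m, b * r ^ Suc m / q ^ Suc m,
       c * s ^ Suc m / q ^ Suc m, d * t ^ Suc m / q ^ Suc m] p"
proof -
  define B C D Q where "B = b * r ^ Suc m" and "C = c * s ^ Suc m" and "D = d * t ^ Suc m"
    and "Q = q ^ Suc m"
  have "B \<noteq> 0" "C \<noteq> 0" "D \<noteq> 0" "Q \<noteq> 0"
    unfolding B_def C_def D_def Q_def using nonzero by simp_all
  note four_term = theta_four_term_identity[OF nome this]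
  have "(q ^ 2) ^ m = (q ^ m) ^ 2"
    by (simp flip: power_mult add: mult.commute)
  then have arguments:
    "a * (r * s * t / q ^ 2) * (r * s * t / q ^ 2) ^ m = B * C * D / Q ^ 2"
    "b * r * r ^ m = B" "c * s * s ^ m = C" "d * t * t ^ m = D" "q * q ^ m = Q"
    "a * s * t / (b * q) * (s * t / q) ^ m = C * D / Q"
    "a * r * t / (c * q) * (r * t / q) ^ m = B * D / Q"
    "a * r * s / (d * q) * (r * s / q) ^ m = B * C / Q"
    "a * (r * s * t / q) ^ Suc m = B * C * D / Q"
    "b * r ^ Suc m / q ^ Suc m = B / Q" "c * s ^ Suc m / q ^ Suc m = C / Q"
    "d * t ^ Suc m / q ^ Suc m = D / Q"
    unfolding B_def C_def D_def Q_def balanced using nonzero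
    by (simp_all add: field_simps power_mult_distrib)
  show ?thesis
    unfolding arguments theta_list_4 unfolding Q_def[symmetric] four_term by (simp add: mult_ac)
qed

lemma summand_0:
  assumes "theta_list [a, b, c, d] p \<noteq> 0"
  shows "summand 0 = 1"
  using assms unfolding summand_def denominator_def by simp

lemma summand_Suc:
  assumes "theta_list [a, b, c, d] p \<noteq> 0" "denominator (Suc m) \<noteq> 0"
  shows "summand (Suc m) = closed_numer (Suc m) / denominator (Suc m) - closed_numer m / denominator m"
proof -
  define X where "X = theta (a * (r * s * t / q ^ 2) * (r * s * t / q ^ 2) ^ m) p
    * theta (b * r * r ^ m) p * theta (c * s * s ^ m) p * theta (d * t * t ^ m) p"
  define Y where "Y = theta (q * q ^ m) p * theta (a * s * t / (b * q) * (s * t / q) ^ m) p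
    * theta (a * r * t / (c * q) * (r * t / q) ^ m) p * theta (a * r * s / (d * q) * (r * s / q) ^ m) p"
  define L where "L = theta_list [a * (r * s * t / q) ^ Suc m, b * r ^ Suc m / q ^ Suc m,
    c * s ^ Suc m / q ^ Suc m, d * t ^ Suc m / q ^ Suc m] p"
  have numer_Suc: "closed_numer (Suc m) = closed_numer m * X"
    unfolding closed_numer_def X_def ell_poch_Suc by (simp add: mult_ac)
  have denominator_Suc: "denominator (Suc m) = denominator m * Y"
    unfolding denominator_def Y_def ell_poch_Suc by (simp add: mult_ac)
  have "ell_poch a (r * s * t / q ^ 2) p (Suc m) * ell_poch b r p (Suc m) * ell_poch c s p (Suc m)
      * ell_poch d t p (Suc m) = theta_list [a, b, c, d] p * closed_numer m"
    unfolding closed_numer_def theta_list_4 ell_poch_Suc_shift by (simp add: mult_ac)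
  then have "summand (Suc m) = L * closed_numer m / denominator (Suc m) * q ^ Suc m"
    unfolding summand_def L_def using assms(1) by simp
  also have "\<dots> = closed_numer m * (X - Y) / (denominator m * Y)"
    unfolding X_def Y_def L_def theta_telescoping_step denominator_Suc by (simp add: mult_ac)
  also have "\<dots> = closed_numer (Suc m) / denominator (Suc m) - closed_numer m / denominator m"
    using assms(2) unfolding numer_Suc denominator_Suc by (simp add: field_simps)
  finally show ?thesis .
qed

lemma sum_summand:
  assumes "theta_list [a, b, c, d] p \<noteq> 0" "\<And>k. k \<le> n \<Longrightarrow> denominator k \<noteq> 0"
  shows "(\<Sum>k=0..n. summand k) = closed_numer n / denominator n"
  using assms(2)
proof (induction n)
  case 0
  then show ?case
    using summand_0[OF assms(1)] by (simp add: closed_numer_def denominator_def)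
next
  case (Suc n)
  then show ?case
    using summand_Suc[OF assms(1)] by simp
qed

end

theorem mainTheorem7:
  fixes p a b q r s t :: complex and n :: nat
  assumes hp: "norm p < 1"
    and nz: "a \<noteq> 0" "b \<noteq> 0" "q \<noteq> 0" "r \<noteq> 0" "s \<noteq> 0" "t \<noteq> 0"
    and hn: "n \<ge> 1"
    and den1: "theta_list [a, b, 1 / s ^ n, a * s ^ n / b] p \<noteq> 0"
    and den2: "\<And>k. k \<le> n \<Longrightarrow>
        ell_poch q q p k * ell_poch (a * s * t / (b * q)) (s * t / q) p k
        * ell_poch (a * s ^ n * r * t / q) (r * t / q) p k
        * ell_poch (b * r * s / (q * s ^ n)) (r * s / q) p k \<noteq> 0"
  shows "(\<Sum>k=0..n.
      theta_list [a * (r * s * t / q) ^ k, b * r ^ k / q ^ k,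
                  s ^ k / (s ^ n * q ^ k), a * s ^ n * t ^ k / (b * q ^ k)] p
      / theta_list [a, b, 1 / s ^ n, a * s ^ n / b] p
      * (ell_poch a (r * s * t / q ^ 2) p k * ell_poch b r p k
         * ell_poch (1 / s ^ n) s p k * ell_poch (a * s ^ n / b) t p k)
      / (ell_poch q q p k * ell_poch (a * s * t / (b * q)) (s * t / q) p k
         * ell_poch (a * s ^ n * r * t / q) (r * t / q) p k
         * ell_poch (b * r * s / (q * s ^ n)) (r * s / q) p k)
      * q ^ k) = 0"
proof -
  interpret elliptic_telescoping p a b "1 / s ^ n" "a * s ^ n / b" q r s t
    using hp nz by unfold_locales (simp_all add: field_simps)
  have shapes: "1 / s ^ n * s ^ k / q ^ k = s ^ k / (s ^ n * q ^ k)"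
    "a * s ^ n / b * t ^ k / q ^ k = a * s ^ n * t ^ k / (b * q ^ k)"
    "a * r * t / (1 / s ^ n * q) = a * s ^ n * r * t / q"
    "a * r * s / (a * s ^ n / b * q) = b * r * s / (q * s ^ n)" for k
    using nz by (simp_all add: field_simps)
  have "closed_numer n = 0"
    unfolding closed_numer_def
    using ell_poch_eq_0[OF hp, of "n - 1" n "1 / s ^ n * s" s] hn nz
    by (simp add: power_Suc[symmetric] del: power_Suc)
  then have "(\<Sum>k=0..n. summand k) = 0"
    using sum_summand den1 den2 unfolding denominator_def shapes by simp
  then show ?thesis
    unfolding summand_def denominator_def shapes .
qed

end
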